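(* Let $a\in\mathbb{Z}$, $0<\beta\leq2$, $T>0$, and let $L$ be the linear operator on functions on $\mathbb{T}^2$ given by $L\rho=-a\cos(ax_2)\,R_1^2\Lambda^\beta\rho$. If $\rho\in L^\infty(0,T;L^2(\mathbb{T}^2))$ is a solution of the initial value problem $\partial_t\rho=L\rho$, $\rho(\cdot,0)=0$, then $\rho(\cdot,t)=0$ for every $t\in(0,T)$.
   Context: $\Lambda=(-\Delta)^{1/2}$ and $R_1=\partial_{x_1}\Lambda^{-1}$ is a Riesz transform, so $R_1^2\Lambda^\beta$ is the Fourier multiplier on $\mathbb{T}^2$ with symbol $-k_1^2|\boldsymbol{k}|^{\beta-2}$. *)

theory Defs
  imports "HOL-Analysis.Analysis"
begin

text \<open>The torus T^2 is represented by the fundamental domain [0,2pi]^2;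
functions on T^2 are functions on real x real, only their values on the box matter.\<close>

definition torus_box :: "(real \<times> real) set" where
  "torus_box = {0..2*pi} \<times> {0..2*pi}"

definition fcoeff :: "(real \<times> real \<Rightarrow> real) \<Rightarrow> int \<times> int \<Rightarrow> complex" where
  "fcoeff f k = complex_of_real (1 / (4 * pi^2)) *
     set_lebesgue_integral lborel torus_box
       (\<lambda>x. complex_of_real (f x) *
              cis (- (real_of_int (fst k) * fst x + real_of_int (snd k) * snd x)))"

text \<open>Symbol of R_1^2 Lambda^beta: -k1^2 |k|^(beta-2) (zero at k = 0).\<close>
definition riesz_sym :: "real \<Rightarrow> int \<times> int \<Rightarrow> complex" where
  "riesz_sym \<beta> k = (if k = (0, 0) then 0 else
      complex_of_real (- ((real_of_int (fst k))\<^sup>2 *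
        (sqrt ((real_of_int (fst k))\<^sup>2 + (real_of_int (snd k))\<^sup>2)) powr (\<beta> - 2))))"

definition riesz_op_hat :: "real \<Rightarrow> (int \<times> int \<Rightarrow> complex) \<Rightarrow> int \<times> int \<Rightarrow> complex" where
  "riesz_op_hat \<beta> c k = riesz_sym \<beta> k * c k"

text \<open>Fourier coefficients of cos(a x2) g(x), given the coefficients c of g.\<close>
definition mult_cos_hat :: "int \<Rightarrow> (int \<times> int \<Rightarrow> complex) \<Rightarrow> int \<times> int \<Rightarrow> complex" where
  "mult_cos_hat a c k = (c (fst k, snd k - a) + c (fst k, snd k + a)) / 2"

definition L_hat :: "int \<Rightarrow> real \<Rightarrow> (int \<times> int \<Rightarrow> complex) \<Rightarrow> int \<times> int \<Rightarrow> complex" where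
  "L_hat a \<beta> c k = - of_int a * mult_cos_hat a (riesz_op_hat \<beta> c) k"

end

theory Submission
  imports Defs
begin

text \<open>Only \<open>\<beta> \<le> 2\<close> matters: it gives \<open>|riesz_sym \<beta> k| \<le> k\<^sub>1\<^sup>2\<close>.
Multiplication by \<open>cos (a x\<^sub>2)\<close> only shifts the second frequency, so the equation couples
the coefficients \<open>c\<^sub>t(k\<^sub>1, \<cdot>)\<close> for a fixed \<open>k\<^sub>1\<close> among themselves, with
\<open>|L_hat c (k\<^sub>1, k\<^sub>2)| \<le> |a| k\<^sub>1\<^sup>2 sup\<^sub>j |c (k\<^sub>1, j)|\<close>. The \<open>L\<^sup>\<infinity>L\<^sup>2\<close> bound makes
all coefficients uniformly bounded by some \<open>B\<close>, and iterating the integral equation gives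
\<open>|c\<^sub>t(k)| \<le> B (|a| k\<^sub>1\<^sup>2 t)\<^sup>n / n!\<close> for every \<open>n\<close>, so all coefficients vanish.
Fourier uniqueness then gives \<open>\<rho>(t) = 0\<close> a.e.: a function with vanishing coefficients
annihilates all trigonometric polynomials, hence (Stone-Weierstrass on the torus embedded in
\<open>\<real>\<^sup>4\<close>) all continuous periodic functions, hence (dominated convergence) the indicators
of all boxes inside \<open>(0, 2\<pi>)\<^sup>2\<close>, hence all Borel sets.\<close>

(* No integrability of f is assumed: a non-integrable function has Bochner integral 0. *)
lemma norm_set_integral_le:
  fixes f :: "'a \<Rightarrow> 'b::{banach, second_countable_topology}"
  assumes g: "set_integrable M A g" and le: "\<And>x. x \<in> A \<Longrightarrow> norm (f x) \<le> g x"
  shows "norm (LINT x:A|M. f x) \<le> (LINT x:A|M. g x)"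
proof (cases "set_integrable M A f")
  case True
  then have "norm (LINT x:A|M. f x) \<le> (LINT x:A|M. norm (f x))"
    by (rule set_integral_norm_bound)
  also have "\<dots> \<le> (LINT x:A|M. g x)"
    using True g le by (intro set_integral_mono) (auto simp: set_integrable_norm)
  finally show ?thesis .
next
  case False
  have "0 \<le> g x" if "x \<in> A" for x
    using le[OF that] norm_ge_zero[of "f x"] by linarith
  then have "0 \<le> (LINT x:A|M. g x)"
    unfolding set_lebesgue_integral_def by (intro integral_nonneg_AE AE_I2) (simp add: indicator_def)
  moreover have "(LINT x:A|M. f x) = 0"
    using False by (simp add: set_lebesgue_integral_def set_integrable_def not_integrable_integral_eq)
  ultimately show ?thesis by simp
qed

lemma set_integral_abs_le_square:
  fixes f :: "'a \<Rightarrow> real"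
  assumes A: "A \<in> sets M" "emeasure M A < \<infinity>" and f [measurable]: "f \<in> borel_measurable M"
    and square: "set_integrable M A (\<lambda>x. (f x)\<^sup>2)"
  shows "set_integrable M A f" and "(LINT x:A|M. \<bar>f x\<bar>) \<le> (measure M A + (LINT x:A|M. (f x)\<^sup>2)) / 2"
proof -
  have "set_integrable M A (\<lambda>x. 1 :: real)"
    using A by (simp add: set_integrable_def integrable_real_indicator)
  then have bound: "set_integrable M A (\<lambda>x. (1 + (f x)\<^sup>2) / 2)"
    using square by (intro set_integrable_divide set_integral_add)
  have abs_le: "\<bar>f x\<bar> \<le> (1 + (f x)\<^sup>2) / 2" for x
    using zero_le_power2[of "\<bar>f x\<bar> - 1"] by (simp add: power2_diff)
  show integrable: "set_integrable M A f"
    using A abs_le by (intro set_integrable_bound[OF bound]) (auto simp: set_borel_measurable_def)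
  have "(LINT x:A|M. \<bar>f x\<bar>) \<le> (LINT x:A|M. (1 + (f x)\<^sup>2) / 2)"
    using integrable bound abs_le by (intro set_integral_mono set_integrable_abs)
  also have "\<dots> = ((LINT x:A|M. 1) + (LINT x:A|M. (f x)\<^sup>2)) / 2"
    using \<open>set_integrable M A (\<lambda>x. 1 :: real)\<close> square by simp
  also have "(LINT x:A|M. 1) = measure M A"
    using A by (simp add: set_lebesgue_integral_def)
  finally show "(LINT x:A|M. \<bar>f x\<bar>) \<le> (measure M A + (LINT x:A|M. (f x)\<^sup>2)) / 2" .
qed

lemma set_integrable_scaleR_continuous:
  fixes f :: "'a::euclidean_space \<Rightarrow> real" and r :: "'a \<Rightarrow> 'b::{banach, second_countable_topology}"
  assumes f: "set_integrable lborel S f" and S: "compact S" and r: "continuous_on S r"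
  shows "set_integrable lborel S (\<lambda>x. f x *\<^sub>R r x)"
proof -
  obtain C where C: "\<And>x. x \<in> S \<Longrightarrow> norm (r x) \<le> C"
    using compact_imp_bounded[OF compact_continuous_image[OF r S]] by (auto simp: bounded_iff)
  have "set_borel_measurable lborel S f"
    using f by (simp add: set_integrable_def set_borel_measurable_def)
  moreover have "set_borel_measurable lborel S r"
    using set_measurable_continuous_on[OF borel_compact[OF S] r] by (simp add: set_borel_measurable_def)
  ultimately have "set_borel_measurable lborel S (\<lambda>x. f x *\<^sub>R r x)"
    unfolding set_borel_measurable_def
    by (rule borel_measurable_scaleR[THEN measurable_cong[THEN iffD1, rotated]])
      (auto simp: indicator_def)
  moreover have "norm (f x *\<^sub>R r x) \<le> norm (C * f x)" if "x \<in> S" for x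
  proof -
    have "\<bar>f x\<bar> * norm (r x) \<le> \<bar>f x\<bar> * \<bar>C\<bar>"
      using C[OF that] by (intro mult_left_mono) auto
    then show ?thesis by (simp add: abs_mult mult.commute)
  qed
  ultimately show ?thesis
    by (intro set_integrable_bound[OF set_integrable_mult_right[OF f]]) auto
qed

lemma borel_measurable_slice:
  fixes \<rho> :: "'a::topological_space \<Rightarrow> 'b::topological_space \<Rightarrow> 'c::topological_space"
  assumes "(\<lambda>(t, x). \<rho> t x) \<in> borel_measurable borel"
  shows "\<rho> t \<in> borel_measurable borel"
proof -
  have "(\<lambda>x. (t, x)) \<in> borel_measurable (borel :: 'b measure)"
    by (intro borel_measurable_continuous_onI continuous_intros)
  from measurable_compose[OF this assms] show ?thesis by simp
qed

lemma integral_eq_0_if_set_integral_box_eq_0: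
  fixes g :: "'a::euclidean_space \<Rightarrow> 'b::{banach, second_countable_topology}"
  assumes g: "integrable lborel g" and boxes: "\<And>a b. (LINT x:box a b|lborel. g x) = 0"
  shows "integral\<^sup>L lborel g = 0"
proof -
  let ?B = "\<lambda>i::nat. box (- (real i *\<^sub>R One)) (real i *\<^sub>R One) :: 'a set"
  have "incseq ?B"
    by (rule monoI) (fastforce simp: mem_box)
  then have "(\<lambda>i. LINT x:?B i|lborel. g x) \<longlonglongrightarrow> (LINT x:(\<Union>i. ?B i)|lborel. g x)"
    using g by (intro set_integral_cont_up) (auto simp: set_integrable_def UN_box_eq_UNIV)
  moreover have "(LINT x:UNIV|lborel. g x) = integral\<^sup>L lborel g"
    by (simp add: set_lebesgue_integral_def)
  ultimately have "(\<lambda>i. 0) \<longlonglongrightarrow> integral\<^sup>L lborel g"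
    by (simp add: boxes UN_box_eq_UNIV)
  then show ?thesis
    by (simp add: LIMSEQ_const_iff)
qed

lemma AE_eq_0_if_set_integral_box_eq_0:
  fixes g :: "'a::euclidean_space \<Rightarrow> 'b::{banach, second_countable_topology}"
  assumes g: "integrable lborel g" and boxes: "\<And>a b. (LINT x:box a b|lborel. g x) = 0"
  shows "AE x in lborel. g x = 0"
proof (rule sigma_finite_measure.density_zero[OF sigma_finite_lborel g])
  fix A :: "'a set" assume A: "A \<in> sets lborel"
  have "Int_stable (range (\<lambda>(a, b). box a b :: 'a set))"
    by (auto simp: Int_stable_def box_Int_box)
  moreover have "range (\<lambda>(a, b). box a b :: 'a set) \<subseteq> Pow UNIV"
    by simp
  moreover have "A \<in> sigma_sets UNIV (range (\<lambda>(a, b). box a b))"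
    using A by (simp add: borel_eq_box)
  ultimately show "(LINT x:A|lborel. g x) = 0"
  proof (induction rule: sigma_sets_induct_disjoint)
    case (basic A)
    then show ?case using boxes by auto
  next
    case empty
    then show ?case by (simp add: set_lebesgue_integral_def)
  next
    case (compl A)
    then have [measurable]: "A \<in> sets borel"
      by (simp add: borel_eq_box)
    have "(LINT x:UNIV - A|lborel. g x) = integral\<^sup>L lborel g - (LINT x:A|lborel. g x)"
      using g unfolding set_lebesgue_integral_def
      by (subst Bochner_Integration.integral_diff[symmetric])
        (auto intro!: Bochner_Integration.integral_cong integrable_mult_indicator split: split_indicator)
    then show ?case
      using compl.IH integral_eq_0_if_set_integral_box_eq_0[OF g boxes] by simp
  next
    case (union F)
    then have [measurable]: "\<And>i. F i \<in> sets borel"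
      by (simp add: borel_eq_box subset_eq)
    have "(LINT x:(\<Union>i. F i)|lborel. g x) = (\<Sum>i. (LINT x:F i|lborel. g x))"
      using union(1) g
      by (intro lebesgue_integral_countable_add)
        (auto simp: disjoint_family_on_def set_integrable_def intro: integrable_mult_indicator)
    then show ?case using union.IH by simp
  qed
qed

lemma volterra_uniqueness:
  fixes u F :: "real \<Rightarrow> 'i \<Rightarrow> 'a::{banach, second_countable_topology}"
  assumes bounded: "\<And>s j. s \<in> {0..<T} \<Longrightarrow> norm (u s j) \<le> B"
    and initial: "\<And>j. u 0 j = 0"
    and integral_eq: "\<And>t j. t \<in> {0<..<T} \<Longrightarrow> u t j = (LINT s:{0..t}|lborel. F s j)"
    and F_le: "\<And>s X j. s \<in> {0..<T} \<Longrightarrow> (\<And>j'. norm (u s j') \<le> X) \<Longrightarrow> norm (F s j) \<le> K * X"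
    and t: "t \<in> {0..<T}"
  shows "u t j = 0"
proof -
  have B: "0 \<le> B"
    using bounded[OF t] norm_ge_zero order_trans by blast
  have picard: "norm (u t j) \<le> B * (K * t) ^ n / fact n" if "t \<in> {0..<T}" for n t j
    using that
  proof (induction n arbitrary: t j)
    case 0
    then show ?case using bounded by simp
  next
    case (Suc n)
    show ?case
    proof (cases "t = 0")
      case True
      then show ?thesis using initial B by simp
    next
      case False
      with Suc.prems have "t \<in> {0<..<T}" by simp
      then have "norm (u t j) = norm (LINT s:{0..t}|lborel. F s j)"
        by (simp add: integral_eq)
      also have "\<dots> \<le> (LINT s:{0..t}|lborel. (K * B * K ^ n / fact n) * s ^ n)"
      proof (rule norm_set_integral_le)
        show "set_integrable lborel {0..t} (\<lambda>s. (K * B * K ^ n / fact n) * s ^ n)"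
          unfolding set_integrable_def by (intro borel_integrable_compact continuous_intros) simp
        fix s assume "s \<in> {0..t}"
        with Suc.prems have "s \<in> {0..<T}" by simp
        from F_le[OF this Suc.IH[OF this]]
        show "norm (F s j) \<le> (K * B * K ^ n / fact n) * s ^ n"
          by (simp add: power_mult_distrib mult_ac)
      qed
      also have "\<dots> = (K * B * K ^ n / fact n) * (t ^ Suc n / Suc n)"
        using Suc.prems integral_power[of 0 t n] by (simp add: set_lebesgue_integral_def mult.commute)
      also have "\<dots> = B * (K * t) ^ Suc n / fact (Suc n)"
        by (simp add: power_mult_distrib field_simps)
      finally show ?thesis .
    qed
  qed
  have "(\<lambda>n. B * (inverse (fact n) * (K * t) ^ n)) \<longlonglongrightarrow> 0"
    by (intro tendsto_mult_right_zero summable_LIMSEQ_zero summable_exp)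
  then have "(\<lambda>n. B * (K * t) ^ n / fact n) \<longlonglongrightarrow> 0"
    by (simp add: field_simps)
  then have "norm (u t j) \<le> 0"
    using picard[OF t] by (intro LIMSEQ_le_const) auto
  then show ?thesis by simp
qed

lemma norm_riesz_sym_le:
  assumes "\<beta> \<le> 2"
  shows "norm (riesz_sym \<beta> k) \<le> (real_of_int (fst k))\<^sup>2"
proof (cases "k = (0, 0)")
  case True
  then show ?thesis by (simp add: riesz_sym_def)
next
  case False
  obtain k1 k2 where k: "k = (k1, k2)" by (cases k)
  have "1 \<le> k1\<^sup>2 + k2\<^sup>2"
    using False k by (metis add.commute add_increasing int_one_le_iff_zero_less zero_le_power2
        zero_less_power2 prod.inject)
  then have "1 \<le> sqrt ((real_of_int k1)\<^sup>2 + (real_of_int k2)\<^sup>2)"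
    by (metis of_int_add of_int_le_iff of_int_1 of_int_power real_sqrt_ge_1_iff)
  then have "sqrt ((real_of_int k1)\<^sup>2 + (real_of_int k2)\<^sup>2) powr (\<beta> - 2) \<le> 1"
    using powr_mono[of "\<beta> - 2" 0] assms by auto
  then show ?thesis
    using False k by (simp add: riesz_sym_def norm_mult norm_power mult_left_le)
qed

lemma norm_L_hat_le:
  assumes "\<beta> \<le> 2" and bound: "\<And>j. norm (c (k1, j)) \<le> X"
  shows "norm (L_hat a \<beta> c (k1, k2)) \<le> \<bar>real_of_int a\<bar> * (real_of_int k1)\<^sup>2 * X"
proof -
  have term_le: "norm (riesz_sym \<beta> (k1, j) * c (k1, j)) \<le> (real_of_int k1)\<^sup>2 * X" for j
    unfolding norm_mult
    using norm_riesz_sym_le[OF assms(1), of "(k1, j)"] bound[of j] by (simp add: mult_mono')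
  have "norm (L_hat a \<beta> c (k1, k2)) = \<bar>real_of_int a\<bar> *
     norm (riesz_sym \<beta> (k1, k2 - a) * c (k1, k2 - a) + riesz_sym \<beta> (k1, k2 + a) * c (k1, k2 + a)) / 2"
    by (simp add: L_hat_def mult_cos_hat_def riesz_op_hat_def norm_mult norm_divide)
  also have "\<dots> \<le> \<bar>real_of_int a\<bar> * (2 * ((real_of_int k1)\<^sup>2 * X)) / 2"
    using norm_triangle_le[OF add_mono[OF term_le[of "k2 - a"] term_le[of "k2 + a"]]]
    by (intro divide_right_mono mult_left_mono) (auto simp: mult.commute)
  finally show ?thesis by simp
qed

lemma L_hat_equation_unique:
  fixes C :: "real \<Rightarrow> int \<times> int \<Rightarrow> complex"
  assumes beta: "\<beta> \<le> 2"
    and bounded: "\<And>s k. s \<in> {0..<T} \<Longrightarrow> norm (C s k) \<le> B"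
    and initial: "\<And>k. C 0 k = 0"
    and equation: "\<And>t k. t \<in> {0<..<T} \<Longrightarrow> C t k = (LINT s:{0..t}|lborel. L_hat a \<beta> (C s) k)"
    and t: "t \<in> {0..<T}"
  shows "C t k = 0"
proof (cases k)
  case (Pair k1 k2)
  have "C t (k1, k2) = 0"
  proof (rule volterra_uniqueness[where u = "\<lambda>s j. C s (k1, j)"
        and F = "\<lambda>s j. L_hat a \<beta> (C s) (k1, j)" and K = "\<bar>real_of_int a\<bar> * (real_of_int k1)\<^sup>2"])
    show "norm (L_hat a \<beta> (C s) (k1, j)) \<le> \<bar>real_of_int a\<bar> * (real_of_int k1)\<^sup>2 * X"
      if "\<And>j'. norm (C s (k1, j')) \<le> X" for s X j
      by (rule norm_L_hat_le[OF beta]) (rule that)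
  qed (use bounded initial equation t in auto)
  then show ?thesis by (simp add: Pair)
qed

lemma torus_box_eq_cbox: "torus_box = cbox (0, 0) (2 * pi, 2 * pi)"
  by (simp add: torus_box_def cbox_Pair_eq)

lemma compact_torus_box: "compact torus_box"
  by (simp add: torus_box_eq_cbox)

lemma sets_torus_box [measurable]: "torus_box \<in> sets borel"
  by (simp add: torus_box_eq_cbox)

lemma emeasure_torus_box_finite: "emeasure lborel torus_box < \<infinity>"
  by (simp add: torus_box_eq_cbox emeasure_lborel_cbox_eq)

definition torus_char :: "int \<times> int \<Rightarrow> real \<times> real \<Rightarrow> complex" where
  "torus_char k x = cis (of_int (fst k) * fst x + of_int (snd k) * snd x)"

lemma continuous_on_torus_char: "continuous_on S (torus_char k)"
  unfolding torus_char_def cis_conv_exp by (intro continuous_intros)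

lemma torus_char_mult: "torus_char j x * torus_char k x = torus_char (j + k) x"
  by (simp add: torus_char_def cis_mult algebra_simps)

lemma fcoeff_eq_set_integral_torus_char:
  "fcoeff f k = (LINT x:torus_box|lborel. f x *\<^sub>R torus_char (- k) x) / (4 * pi\<^sup>2)"
  by (simp add: fcoeff_def torus_char_def scaleR_conv_of_real algebra_simps)

lemma fcoeff_eq_0_if_AE_zero:
  assumes "AE x in lborel. x \<in> torus_box \<longrightarrow> f x = 0"
  shows "fcoeff f k = 0"
proof -
  have "(LINT x:torus_box|lborel. f x *\<^sub>R torus_char (- k) x) = 0"
    unfolding set_lebesgue_integral_def
    by (rule integral_eq_zero_AE) (use assms in \<open>auto simp: indicator_def\<close>)
  then show ?thesis by (simp add: fcoeff_eq_set_integral_torus_char)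
qed

lemma norm_fcoeff_le:
  assumes "set_integrable lborel torus_box f"
  shows "norm (fcoeff f k) \<le> (LINT x:torus_box|lborel. \<bar>f x\<bar>) / (4 * pi\<^sup>2)"
proof -
  have "norm (LINT x:torus_box|lborel. f x *\<^sub>R torus_char (- k) x) \<le> (LINT x:torus_box|lborel. \<bar>f x\<bar>)"
    using set_integrable_abs[OF assms]
    by (rule norm_set_integral_le) (simp add: torus_char_def)
  then show ?thesis
    by (simp add: fcoeff_eq_set_integral_torus_char norm_divide norm_power divide_right_mono)
qed

inductive trig_poly :: "(real \<times> real \<Rightarrow> complex) \<Rightarrow> bool" where
  monomial: "trig_poly (\<lambda>x. c * torus_char k x)"
| add: "trig_poly p \<Longrightarrow> trig_poly q \<Longrightarrow> trig_poly (\<lambda>x. p x + q x)"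

lemma continuous_on_trig_poly: "trig_poly p \<Longrightarrow> continuous_on S p"
  by (induction rule: trig_poly.induct) (auto intro: continuous_intros continuous_on_torus_char)

lemma trig_poly_const: "trig_poly (\<lambda>x. c)"
  using trig_poly.monomial[of c 0] by (simp add: torus_char_def)

lemma trig_poly_cmult: "trig_poly p \<Longrightarrow> trig_poly (\<lambda>x. c * p x)"
proof (induction rule: trig_poly.induct)
  case (monomial c' k)
  then show ?case using trig_poly.monomial[of "c * c'" k] by (simp add: mult.assoc)
next
  case (add p q)
  then show ?case using trig_poly.add by (simp add: distrib_left)
qed

lemma trig_poly_mult_torus_char: "trig_poly p \<Longrightarrow> trig_poly (\<lambda>x. p x * torus_char k x)"
proof (induction rule: trig_poly.induct)
  case (monomial c j)
  then show ?case using trig_poly.monomial[of c "j + k"] by (simp add: mult.assoc torus_char_mult)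
next
  case (add p q)
  then show ?case using trig_poly.add by (simp add: distrib_right)
qed

lemma trig_poly_mult: "trig_poly p \<Longrightarrow> trig_poly q \<Longrightarrow> trig_poly (\<lambda>x. p x * q x)"
proof (induction rule: trig_poly.induct)
  case (monomial c k)
  then show ?case
    using trig_poly_cmult[OF trig_poly_mult_torus_char[OF monomial], of c k] by (simp add: mult_ac)
next
  case (add p p')
  then show ?case using trig_poly.add by (simp add: distrib_right)
qed

lemma trig_poly_cos_sin:
  fixes k1 k2 :: int
  defines "\<theta> \<equiv> \<lambda>x. of_int k1 * fst x + of_int k2 * snd x"
  shows "trig_poly (\<lambda>x. complex_of_real (cos (\<theta> x)))" and "trig_poly (\<lambda>x. complex_of_real (sin (\<theta> x)))"
proof -
  have char: "torus_char (k1, k2) x = cis (\<theta> x)" "torus_char (- k1, - k2) x = cis (- \<theta> x)" for x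
    by (simp_all add: torus_char_def \<theta>_def algebra_simps)
  have "complex_of_real (cos t) = (1/2) * cis t + (1/2) * cis (- t)"
    and "complex_of_real (sin t) = (1/(2*\<i>)) * cis t + (- 1/(2*\<i>)) * cis (- t)" for t
    by (simp_all add: complex_eq_iff)
  then have "(\<lambda>x. complex_of_real (cos (\<theta> x))) =
        (\<lambda>x. (1/2) * torus_char (k1, k2) x + (1/2) * torus_char (- k1, - k2) x)"
    and "(\<lambda>x. complex_of_real (sin (\<theta> x))) =
        (\<lambda>x. (1/(2*\<i>)) * torus_char (k1, k2) x + (- 1/(2*\<i>)) * torus_char (- k1, - k2) x)"
    by (simp_all only: char)
  then show "trig_poly (\<lambda>x. complex_of_real (cos (\<theta> x)))" "trig_poly (\<lambda>x. complex_of_real (sin (\<theta> x)))"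
    by (simp_all only:) (intro trig_poly.add trig_poly.monomial)+
qed

definition torus_embedding :: "real \<times> real \<Rightarrow> (real \<times> real) \<times> (real \<times> real)" where
  "torus_embedding x = ((cos (fst x), sin (fst x)), (cos (snd x), sin (snd x)))"

lemma continuous_on_torus_embedding: "continuous_on S torus_embedding"
  unfolding torus_embedding_def by (intro continuous_intros)

lemma trig_poly_real_polynomial:
  "real_polynomial_function p \<Longrightarrow> trig_poly (\<lambda>x. complex_of_real (p (torus_embedding x)))"
proof (induction rule: real_polynomial_function.induct)
  case (linear p)
  then interpret p: bounded_linear p .
  have "p (torus_embedding x) =
      cos (fst x) * p ((1, 0), (0, 0)) + sin (fst x) * p ((0, 1), (0, 0)) +
      cos (snd x) * p ((0, 0), (1, 0)) + sin (snd x) * p ((0, 0), (0, 1))" for x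
  proof -
    have eq: "torus_embedding x = cos (fst x) *\<^sub>R ((1, 0), (0, 0)) + sin (fst x) *\<^sub>R ((0, 1), (0, 0)) +
        cos (snd x) *\<^sub>R ((0, 0), (1, 0)) + sin (snd x) *\<^sub>R ((0, 0), (0, 1))"
      by (simp add: torus_embedding_def)
    show ?thesis unfolding eq p.add p.scaleR by simp
  qed
  moreover have "trig_poly (\<lambda>x. complex_of_real (cos (fst x)))" "trig_poly (\<lambda>x. complex_of_real (sin (fst x)))"
      "trig_poly (\<lambda>x. complex_of_real (cos (snd x)))" "trig_poly (\<lambda>x. complex_of_real (sin (snd x)))"
    using trig_poly_cos_sin[of 1 0] trig_poly_cos_sin[of 0 1] by simp_all
  ultimately show ?case
    by simp (intro trig_poly.add trig_poly_mult trig_poly_const)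
next
  case (const c)
  show ?case by (rule trig_poly_const)
next
  case (add p q)
  then show ?case using trig_poly.add by simp
next
  case (mult p q)
  then show ?case using trig_poly_mult by simp
qed

lemma set_integral_trig_poly_eq_0:
  assumes f: "set_integrable lborel torus_box f"
    and orth: "\<And>k. (LINT x:torus_box|lborel. f x *\<^sub>R torus_char k x) = 0"
    and p: "trig_poly p"
  shows "(LINT x:torus_box|lborel. f x *\<^sub>R p x) = 0"
  using p
proof (induction rule: trig_poly.induct)
  case (monomial c k)
  have eq: "(\<lambda>x. f x *\<^sub>R (c * torus_char k x)) = (\<lambda>x. c * (f x *\<^sub>R torus_char k x))"
    by (simp add: fun_eq_iff scaleR_conv_of_real mult_ac)
  show ?case unfolding eq set_integral_mult_right orth by simp
next
  case (add p q)
  have "set_integrable lborel torus_box (\<lambda>x. f x *\<^sub>R r x)" if "trig_poly r" for r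
    using f compact_torus_box continuous_on_trig_poly[OF that] by (rule set_integrable_scaleR_continuous)
  then show ?case
    using add by (simp add: scaleR_add_right set_integral_add)
qed

lemma set_integral_real_polynomial_torus_eq_0:
  assumes f: "set_integrable lborel torus_box f"
    and orth: "\<And>k. (LINT x:torus_box|lborel. f x *\<^sub>R torus_char k x) = 0"
    and p: "real_polynomial_function p"
  shows "(LINT x:torus_box|lborel. f x * p (torus_embedding x)) = 0"
proof -
  have "complex_of_real (LINT x:torus_box|lborel. f x * p (torus_embedding x)) =
      (LINT x:torus_box|lborel. f x *\<^sub>R complex_of_real (p (torus_embedding x)))"
    by (simp add: set_integral_complex_of_real[symmetric] scaleR_conv_of_real)
  also have "\<dots> = 0"
    using f orth trig_poly_real_polynomial[OF p] by (rule set_integral_trig_poly_eq_0)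
  finally show ?thesis by simp
qed

lemma set_integral_continuous_torus_eq_0:
  fixes \<psi> :: "(real \<times> real) \<times> (real \<times> real) \<Rightarrow> real"
  assumes f: "set_integrable lborel torus_box f"
    and orth: "\<And>k. (LINT x:torus_box|lborel. f x *\<^sub>R torus_char k x) = 0"
    and \<psi>: "continuous_on UNIV \<psi>"
  shows "(LINT x:torus_box|lborel. f x * \<psi> (torus_embedding x)) = 0"
proof -
  let ?I = "LINT x:torus_box|lborel. f x * \<psi> (torus_embedding x)"
  let ?A = "LINT x:torus_box|lborel. \<bar>f x\<bar>"
  have integrable: "set_integrable lborel torus_box (\<lambda>x. f x * q (torus_embedding x))"
    if "continuous_on UNIV q" for q :: "_ \<Rightarrow> real"
    using set_integrable_scaleR_continuous[OF f compact_torus_box,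
        OF continuous_on_compose2[OF that continuous_on_torus_embedding]] by simp
  have "\<bar>?I\<bar> \<le> 0 + e" if "0 < e" for e
  proof -
    define \<delta> where "\<delta> = e / (?A + 1)"
    have "0 \<le> ?A"
      unfolding set_lebesgue_integral_def by (intro integral_nonneg_AE AE_I2) simp
    then have \<delta>: "0 < \<delta>" "\<delta> * ?A \<le> e"
      using \<open>0 < e\<close> by (simp_all add: \<delta>_def field_simps)
    obtain p where p: "real_polynomial_function p"
      and close: "\<And>y. y \<in> torus_embedding ` torus_box \<Longrightarrow> \<bar>\<psi> y - p y\<bar> < \<delta>"
      using Stone_Weierstrass_real_polynomial_function[OF
          compact_continuous_image[OF continuous_on_torus_embedding compact_torus_box]
          continuous_on_subset[OF \<psi>] \<delta>(1)] by blast
    have "continuous_on UNIV p"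
      using continuous_real_polymonial_function[OF p] continuous_at_imp_continuous_on by blast
    then have "?I = (LINT x:torus_box|lborel. f x * (\<psi> (torus_embedding x) - p (torus_embedding x)))"
      using integrable[OF \<psi>] set_integral_real_polynomial_torus_eq_0[OF f orth p]
      by (simp add: integrable right_diff_distrib set_integral_diff)
    also have "norm \<dots> \<le> (LINT x:torus_box|lborel. \<delta> * \<bar>f x\<bar>)"
    proof (rule norm_set_integral_le)
      show "set_integrable lborel torus_box (\<lambda>x. \<delta> * \<bar>f x\<bar>)"
        using set_integrable_abs[OF f] by simp
      fix x assume "x \<in> torus_box"
      then have "\<bar>\<psi> (torus_embedding x) - p (torus_embedding x)\<bar> \<le> \<delta>"
        using close less_imp_le by blast
      then show "norm (f x * (\<psi> (torus_embedding x) - p (torus_embedding x))) \<le> \<delta> * \<bar>f x\<bar>"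
        by (simp add: abs_mult mult.commute[of \<delta>] mult_left_mono)
    qed
    also have "\<dots> = \<delta> * ?A"
      by simp
    finally show ?thesis
      using \<delta>(2) by simp
  qed
  then show ?thesis
    using field_le_epsilon[of "\<bar>?I\<bar>" 0] by simp
qed

lemma cos_midpoint_gt_iff:
  fixes l u x :: real
  assumes "0 \<le> l" "l < u" "u \<le> 2 * pi" "0 \<le> x" "x \<le> 2 * pi"
  shows "cos ((u - l) / 2) < cos (x - (l + u) / 2) \<longleftrightarrow> l < x \<and> x < u"
proof -
  define r where "r = (u - l) / 2"
  define d where "d = \<bar>x - (l + u) / 2\<bar>"
  have r: "0 < r" "r \<le> pi"
    using assms unfolding r_def by auto
  have d: "0 \<le> d" "d \<le> 2 * pi - r"
    using assms unfolding r_def d_def by (auto simp: abs_if field_simps)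
  have cos_d: "cos (x - (l + u) / 2) = cos d"
    unfolding d_def by (simp add: cos_abs_real)
  have "cos d \<le> cos r" if "r \<le> d"
  proof (cases "d \<le> pi")
    case True
    then show ?thesis using cos_monotone_0_pi_le[OF _ that] r by auto
  next
    case False
    have "cos d = cos (2 * pi - d)" by (simp add: cos_diff)
    also have "\<dots> \<le> cos r" using cos_monotone_0_pi_le[of r "2 * pi - d"] False d r by auto
    finally show ?thesis .
  qed
  moreover have "cos r < cos d" if "d < r"
    using cos_monotone_0_pi[OF d(1) that r(2)] .
  moreover have "d < r \<longleftrightarrow> l < x \<and> x < u"
    unfolding d_def r_def by (auto simp: abs_if field_simps)
  ultimately show ?thesis
    unfolding cos_d r_def[symmetric] by (meson not_le)
qed

lemma tendsto_min_one_mult_pos_part: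
  "(\<lambda>n. min 1 (real n * max 0 s)) \<longlonglongrightarrow> (if 0 < s then 1 else 0)"
proof (cases "0 < s")
  case True
  have "\<forall>\<^sub>F n in sequentially. min 1 (real n * max 0 s) = 1"
    using eventually_ge_at_top[of "nat \<lceil>1 / s\<rceil>"]
  proof eventually_elim
    case (elim n)
    then have "1 / s \<le> real n" by linarith
    then show ?case using True by (simp add: field_simps)
  qed
  then show ?thesis using True by (simp add: tendsto_eventually)
qed simp

definition arc_cutoff :: "nat \<Rightarrow> real \<Rightarrow> real \<Rightarrow> real \<Rightarrow> real" where
  "arc_cutoff n l u t = min 1 (real n * max 0 (cos (t - (l + u) / 2) - cos ((u - l) / 2)))"

lemma abs_arc_cutoff_le: "\<bar>arc_cutoff n l u t\<bar> \<le> 1"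
  by (auto simp: arc_cutoff_def)

lemma tendsto_arc_cutoff:
  assumes "0 \<le> l" "l < u" "u \<le> 2 * pi" "0 \<le> t" "t \<le> 2 * pi"
  shows "(\<lambda>n. arc_cutoff n l u t) \<longlonglongrightarrow> indicator {l<..<u} t"
proof -
  have "indicator {l<..<u} t = (if 0 < cos (t - (l + u) / 2) - cos ((u - l) / 2) then 1 else (0::real))"
    using cos_midpoint_gt_iff[OF assms] by (simp add: indicator_def)
  then show ?thesis
    unfolding arc_cutoff_def by (simp only: tendsto_min_one_mult_pos_part)
qed

lemma set_integral_arc_cutoff_eq_0:
  assumes f: "set_integrable lborel torus_box f"
    and orth: "\<And>k. (LINT x:torus_box|lborel. f x *\<^sub>R torus_char k x) = 0"
  shows "(LINT x:torus_box|lborel. f x * (arc_cutoff n l1 u1 (fst x) * arc_cutoff n l2 u2 (snd x))) = 0"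
proof -
  let ?cutoff = "\<lambda>l u c s.
    min 1 (real n * max 0 (c * cos ((l + u) / 2) + s * sin ((l + u) / 2) - cos ((u - l) / 2)))"
  have "arc_cutoff n l1 u1 (fst x) * arc_cutoff n l2 u2 (snd x) =
      (\<lambda>((c1, s1), (c2, s2)). ?cutoff l1 u1 c1 s1 * ?cutoff l2 u2 c2 s2) (torus_embedding x)" for x
    by (simp add: arc_cutoff_def torus_embedding_def cos_diff)
  moreover have "continuous_on UNIV (\<lambda>((c1, s1), (c2, s2)). ?cutoff l1 u1 c1 s1 * ?cutoff l2 u2 c2 s2)"
    by (simp add: case_prod_beta' continuous_intros)
  ultimately show ?thesis
    using set_integral_continuous_torus_eq_0[OF f orth] by simp
qed

lemma set_integral_subbox_eq_0:
  assumes f: "set_integrable lborel torus_box f"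
    and orth: "\<And>k. (LINT x:torus_box|lborel. f x *\<^sub>R torus_char k x) = 0"
    and sub: "box l u \<subseteq> box (0, 0) (2 * pi, 2 * pi)"
  shows "(LINT x:box l u|lborel. f x) = 0"
proof (cases "box l u = {}")
  case True
  then show ?thesis by (simp add: set_lebesgue_integral_def)
next
  case False
  obtain l1 l2 u1 u2 where lu: "l = (l1, l2)" "u = (u1, u2)"
    by (cases l, cases u)
  have bounds: "0 \<le> l1" "l1 < u1" "u1 \<le> 2 * pi" "0 \<le> l2" "l2 < u2" "u2 \<le> 2 * pi"
    using sub False unfolding subset_box(4) box_ne_empty(2) lu by (auto simp: Basis_prod_def)
  have box_sub: "box l u \<subseteq> torus_box"
    using sub box_subset_cbox[of "(0, 0)" "(2 * pi, 2 * pi)"] by (simp add: torus_box_eq_cbox)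
  define \<phi> where "\<phi> n x = arc_cutoff n l1 u1 (fst x) * arc_cutoff n l2 u2 (snd x)" for n x
  have \<phi>_cont: "continuous_on UNIV (\<phi> n)" for n
    unfolding \<phi>_def arc_cutoff_def by (intro continuous_intros)
  have "(LINT x:torus_box|lborel. f x * \<phi> n x) = 0" for n
    unfolding \<phi>_def by (rule set_integral_arc_cutoff_eq_0[OF f orth])
  moreover have "(\<lambda>n. LINT x:torus_box|lborel. f x * \<phi> n x) \<longlonglongrightarrow> (LINT x:box l u|lborel. f x)"
    unfolding set_lebesgue_integral_def
  proof (rule integral_dominated_convergence[where w = "\<lambda>x. norm (indicator torus_box x *\<^sub>R f x)"])
    show "(\<lambda>x. indicator (box l u) x *\<^sub>R f x) \<in> borel_measurable lborel"
      using set_integrable_subset[OF f _ box_sub] by (auto simp: set_integrable_def)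
    show "(\<lambda>x. indicator torus_box x *\<^sub>R (f x * \<phi> n x)) \<in> borel_measurable lborel" for n
      using set_integrable_scaleR_continuous[OF f compact_torus_box continuous_on_subset[OF \<phi>_cont]]
      by (auto simp: set_integrable_def)
    show "integrable lborel (\<lambda>x. norm (indicator torus_box x *\<^sub>R f x))"
      using f by (simp add: set_integrable_def)
    show "AE x in lborel.
        norm (indicator torus_box x *\<^sub>R (f x * \<phi> n x)) \<le> norm (indicator torus_box x *\<^sub>R f x)" for n
      by (intro AE_I2) (auto simp: \<phi>_def abs_mult indicator_def
          intro!: mult_left_le mult_le_one abs_arc_cutoff_le)
    have conv: "(\<lambda>n. \<phi> n x) \<longlonglongrightarrow> indicator (box l u) x" if "x \<in> torus_box" for x
      using that bounds tendsto_mult[OF tendsto_arc_cutoff tendsto_arc_cutoff]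
      by (cases x) (simp add: \<phi>_def lu torus_box_def box_prod indicator_times)
    show "AE x in lborel.
        (\<lambda>n. indicator torus_box x *\<^sub>R (f x * \<phi> n x)) \<longlonglongrightarrow> indicator (box l u) x *\<^sub>R f x"
    proof (rule AE_I2)
      fix x
      show "(\<lambda>n. indicator torus_box x *\<^sub>R (f x * \<phi> n x)) \<longlonglongrightarrow> indicator (box l u) x *\<^sub>R f x"
      proof (cases "x \<in> torus_box")
        case True
        then show ?thesis using tendsto_mult_left[OF conv[OF True], of "f x"] by (simp add: mult.commute)
      next
        case False
        then show ?thesis using box_sub by (auto simp: indicator_def)
      qed
    qed
  qed
  ultimately show ?thesis
    by (simp add: LIMSEQ_const_iff)
qed

lemma AE_zero_if_fcoeff_eq_0:
  assumes f: "set_integrable lborel torus_box f" and coeff: "\<And>k. fcoeff f k = 0"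
  shows "AE x in lborel. x \<in> torus_box \<longrightarrow> f x = 0"
proof -
  define \<Omega> where "\<Omega> = box (0, 0) (2 * pi, 2 * pi :: real)"
  have orth: "(LINT x:torus_box|lborel. f x *\<^sub>R torus_char k x) = 0" for k
    using coeff[of "- k"] by (simp add: fcoeff_eq_set_integral_torus_char)
  have \<Omega>_sub: "\<Omega> \<subseteq> torus_box"
    by (simp add: \<Omega>_def torus_box_eq_cbox box_subset_cbox)
  have "AE x in lborel. indicator \<Omega> x *\<^sub>R f x = 0"
  proof (rule AE_eq_0_if_set_integral_box_eq_0)
    show "integrable lborel (\<lambda>x. indicator \<Omega> x *\<^sub>R f x)"
      using set_integrable_subset[OF f _ \<Omega>_sub] by (simp add: \<Omega>_def set_integrable_def)
    fix a b :: "real \<times> real"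
    obtain c d where cd: "box a b \<inter> \<Omega> = box c d"
      unfolding \<Omega>_def box_Int_box by blast
    have "(LINT x:box a b|lborel. indicator \<Omega> x *\<^sub>R f x) = (LINT x:box c d|lborel. f x)"
      unfolding set_lebesgue_integral_def cd[symmetric] by (simp add: indicator_inter_arith mult.assoc)
    also have "\<dots> = 0"
      using cd by (intro set_integral_subbox_eq_0[OF f orth]) (auto simp: \<Omega>_def)
    finally show "(LINT x:box a b|lborel. indicator \<Omega> x *\<^sub>R f x) = 0" .
  qed
  moreover have "AE x in lborel. x \<notin> torus_box - \<Omega>"
    by (rule AE_not_in) (simp add: \<Omega>_def torus_box_eq_cbox null_sets_cbox_Diff_box)
  ultimately show ?thesis
    by eventually_elim (auto simp: indicator_def)
qed

lemma set_integrable_torus_box_if_square: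
  fixes f :: "real \<times> real \<Rightarrow> real"
  assumes "f \<in> borel_measurable borel" and "set_integrable lborel torus_box (\<lambda>x. (f x)\<^sup>2)"
  shows "set_integrable lborel torus_box f"
proof -
  have "torus_box \<in> sets lborel" and f: "f \<in> borel_measurable lborel"
    using assms(1) by simp_all
  from set_integral_abs_le_square(1)[OF this(1) emeasure_torus_box_finite f assms(2)]
  show ?thesis .
qed

lemma norm_fcoeff_le_square:
  assumes "f \<in> borel_measurable borel" and "set_integrable lborel torus_box (\<lambda>x. (f x)\<^sup>2)"
    and "(LINT x:torus_box|lborel. (f x)\<^sup>2) \<le> M"
  shows "norm (fcoeff f k) \<le> (measure lborel torus_box + M) / (8 * pi\<^sup>2)"
proof -
  note square = set_integral_abs_le_square[of torus_box lborel f, OF _ emeasure_torus_box_finite]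
  have "norm (fcoeff f k) \<le> (LINT x:torus_box|lborel. \<bar>f x\<bar>) / (4 * pi\<^sup>2)"
    using assms square(1) by (intro norm_fcoeff_le) simp_all
  also have "\<dots> \<le> (measure lborel torus_box + M) / 2 / (4 * pi\<^sup>2)"
    using assms square(2) by (intro divide_right_mono) simp_all
  finally show ?thesis by (simp only: divide_divide_eq_left)
qed

theorem proposition2p5:
  fixes a :: int and \<beta> T :: real and \<rho> :: "real \<Rightarrow> real \<times> real \<Rightarrow> real"
  assumes beta_pos: "0 < \<beta>" and beta_le: "\<beta> \<le> 2" and T_pos: "0 < T"
    and meas: "(\<lambda>(t, x). \<rho> t x) \<in> borel_measurable borel"
    and Linf_L2: "\<exists>M. \<forall>t\<in>{0<..<T}.
                    set_integrable lborel torus_box (\<lambda>x. (\<rho> t x)^2) \<and>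
                    set_lebesgue_integral lborel torus_box (\<lambda>x. (\<rho> t x)^2) \<le> M"
    and init: "AE x in lborel. x \<in> torus_box \<longrightarrow> \<rho> 0 x = 0"
    and eqn: "\<forall>k. \<forall>t\<in>{0<..<T}.
                fcoeff (\<rho> t) k - fcoeff (\<rho> 0) k =
                set_lebesgue_integral lborel {0..t} (\<lambda>s. L_hat a \<beta> (fcoeff (\<rho> s)) k)"
  shows "\<forall>t\<in>{0<..<T}. AE x in lborel. x \<in> torus_box \<longrightarrow> \<rho> t x = 0"
proof
  fix t assume t: "t \<in> {0<..<T}"
  obtain M where M: "\<And>t. t \<in> {0<..<T} \<Longrightarrow> set_integrable lborel torus_box (\<lambda>x. (\<rho> t x)\<^sup>2) \<and>
      (LINT x:torus_box|lborel. (\<rho> t x)\<^sup>2) \<le> M"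
    using Linf_L2 by blast
  have slice: "\<rho> s \<in> borel_measurable borel" for s
    using meas by (rule borel_measurable_slice)
  have initial: "fcoeff (\<rho> 0) k = 0" for k
    using init by (rule fcoeff_eq_0_if_AE_zero)
  have bounded: "norm (fcoeff (\<rho> s) k) \<le> (measure lborel torus_box + max 0 M) / (8 * pi\<^sup>2)"
    if "s \<in> {0..<T}" for s k
  proof (cases "s = 0")
    case True
    then show ?thesis by (simp add: initial)
  next
    case False
    with that have "s \<in> {0<..<T}" by simp
    from M[OF this] show ?thesis by (intro norm_fcoeff_le_square slice) (simp_all add: le_max_iff_disj)
  qed
  have "fcoeff (\<rho> t) k = 0" for k
  proof (rule L_hat_equation_unique[where C = "\<lambda>s. fcoeff (\<rho> s)", OF beta_le bounded initial])
    show "fcoeff (\<rho> s) j = (LINT r:{0..s}|lborel. L_hat a \<beta> (fcoeff (\<rho> r)) j)"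
      if "s \<in> {0<..<T}" for s j
      using eqn[rule_format, of s j] that by (simp add: initial)
    show "t \<in> {0..<T}"
      using t by simp
  qed
  moreover have "set_integrable lborel torus_box (\<rho> t)"
    using M[OF t] by (blast intro: set_integrable_torus_box_if_square[OF slice])
  ultimately show "AE x in lborel. x \<in> torus_box \<longrightarrow> \<rho> t x = 0"
    by (intro AE_zero_if_fcoeff_eq_0)
qed

end
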